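(* Let $t\ge 1$ be an integer and $n=2t^2+2t+1$. Let $\mathcal{C}_0\subseteq\mathbb{Z}_n^2$ be a linear $t$-error-correcting perfect code with generator matrix $G=[a~~b]$, and let $\mathcal{C}=\mathbf{x}+\mathcal{C}_0$ for some $\mathbf{x}=(x_1,x_2)\in\mathbb{Z}_n^2$. Let $\mathcal{S}$ be the set of all perfect Sudoku grids with respect to $\mathcal{C}$, and let \[ \mathcal{G}_\mathcal{S}=\langle \tau_2^{x_1+x_2+1}\tau_1^{x_1-x_2}r,\ \tau_1^a\tau_2^b\rangle. \] Then for every $S\in\mathcal{S}$ and every $g\in\mathcal{G}_\mathcal{S}$, we have $g\cdot S\in\mathcal{S}$.
   Context: $\mathbb{Z}_n$ is the integers modulo $n$; Lee weight of $\mathbf{u}\in\mathbb{Z}_n^2$ is $\sum_i\min\{u_i,n-u_i\}$ and Lee distance $d_L(\mathbf{u},\mathbf{v})=\mathrm{wt}_L(\mathbf{u}-\mathbf{v})$. A linear code is a submodule of $\mathbb{Z}_n^2$; a generator matrix is a matrix whose rows form a minimal spanning set. A code with minimum Lee distance $d$ is a perfect code if, with $t=\lfloor (d-1)/2\rfloor$, the Lee balls $\mathcal{B}_t(\mathbf{c})$ of radius $t$ around the codewords cover $\mathbb{Z}_n^2$ (they are then pairwise disjoint); it is $t$-error-correcting if $d\ge 2t+1$. For $n=2t^2+2t+1$, each ball of radius $t$ in $\mathbb{Z}_n^2$ has $n$ points, so such a perfect code has $n$ codewords. A palette grid is an $n\times n$ array with entries in $[n]=\{1,\dots,n\}$ in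 which each symbol occurs exactly $n$ times. Two $n\times n$ arrays with entries in an $n$-set are orthogonal if the $n^2$ ordered pairs of corresponding entries are all distinct. A Sudoku grid with respect to a palette grid $\mathcal{I}$ is a Latin square of order $n$ on $[n]$ orthogonal to $\mathcal{I}$. For a $t$-error-correcting perfect code $\mathcal{C}=\{\mathbf{c}_1,\dots,\mathbf{c}_n\}\subseteq\mathbb{Z}_n^2$, the palette grid $\mathcal{I}_\mathcal{C}$ has rows and columns indexed by $\mathbb{Z}_n$ and entry $i$ at every position $(x,y)\in\mathcal{B}_t(\mathbf{c}_i)$ ($x$ = row, $y$ = column); a perfect Sudoku grid with respect to $\mathcal{C}$ is a Sudoku grid with respect to $\mathcal{I}_\mathcal{C}$. Maps on $n\times n$ arrays $A$ (indices in $\mathbb{Z}_n$): $(r(A))_{i,j}=A_{n-1-j,i}$ (rotation), $(\tau_1(A))_{i,j}=A_{i-1,j}$, $(\tau_2(A))_{i,j}=A_{i,j-1}$ (translations); the group they generate acts on arrays by $\varphi\cdot A=\varphi(A)$ with composition of maps. *)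

theory Defs
  imports Main
begin

text \<open>Elements of Z_n are represented by integers in {0..<n}; Z_n^2 by pairs.
 Arrays indexed by Z_n x Z_n are represented by n-periodic functions int => int => 'a.\<close>

definition Zn2 :: "int \<Rightarrow> (int \<times> int) set" where
  "Zn2 n = {0..<n} \<times> {0..<n}"

definition lee_wt1 :: "int \<Rightarrow> int \<Rightarrow> int" where
  "lee_wt1 n u = min (u mod n) (n - u mod n)"

definition lee_wt :: "int \<Rightarrow> int \<times> int \<Rightarrow> int" where
  "lee_wt n u = lee_wt1 n (fst u) + lee_wt1 n (snd u)"

definition lee_dist :: "int \<Rightarrow> int \<times> int \<Rightarrow> int \<times> int \<Rightarrow> int" where
  "lee_dist n u v = lee_wt n ((fst u - fst v) mod n, (snd u - snd v) mod n)"

definition lee_ball :: "int \<Rightarrow> int \<Rightarrow> int \<times> int \<Rightarrow> (int \<times> int) set" where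
  "lee_ball n t c = {u \<in> Zn2 n. lee_dist n u c \<le> t}"

definition min_lee_dist :: "int \<Rightarrow> (int \<times> int) set \<Rightarrow> int" where
  "min_lee_dist n C = Min {lee_dist n u v | u v. u \<in> C \<and> v \<in> C \<and> u \<noteq> v}"

definition perfect_code :: "int \<Rightarrow> (int \<times> int) set \<Rightarrow> bool" where
  "perfect_code n C \<longleftrightarrow> C \<subseteq> Zn2 n \<and> card C \<ge> 2 \<and>
     (\<Union>c\<in>C. lee_ball n ((min_lee_dist n C - 1) div 2) c) = Zn2 n"

definition t_error_correcting :: "int \<Rightarrow> int \<Rightarrow> (int \<times> int) set \<Rightarrow> bool" where
  "t_error_correcting n t C \<longleftrightarrow> min_lee_dist n C \<ge> 2 * t + 1"

definition span1 :: "int \<Rightarrow> int \<Rightarrow> int \<Rightarrow> (int \<times> int) set" where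
  "span1 n a b = {((k * a) mod n, (k * b) mod n) | k. True}"

definition translate_code :: "int \<Rightarrow> int \<times> int \<Rightarrow> (int \<times> int) set \<Rightarrow> (int \<times> int) set" where
  "translate_code n x C = {((fst x + fst c) mod n, (snd x + snd c) mod n) | c. c \<in> C}"

definition periodic :: "int \<Rightarrow> (int \<Rightarrow> int \<Rightarrow> 'a) \<Rightarrow> bool" where
  "periodic n A \<longleftrightarrow> (\<forall>i j. A (i mod n) (j mod n) = A i j)"

text \<open>Palette grid of a code with enumeration c_1..c_n (x = row, y = column).\<close>
definition palette :: "int \<Rightarrow> int \<Rightarrow> (nat \<Rightarrow> int \<times> int) \<Rightarrow> int \<Rightarrow> int \<Rightarrow> nat" where
  "palette n t c x y = (THE i. i \<in> {1..nat n} \<and> (x mod n, y mod n) \<in> lee_ball n t (c i))"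

definition latin_square :: "int \<Rightarrow> (int \<Rightarrow> int \<Rightarrow> nat) \<Rightarrow> bool" where
  "latin_square n S \<longleftrightarrow>
     (\<forall>x\<in>{0..<n}. bij_betw (\<lambda>y. S x y) {0..<n} {1..nat n}) \<and>
     (\<forall>y\<in>{0..<n}. bij_betw (\<lambda>x. S x y) {0..<n} {1..nat n})"

definition orthogonal :: "int \<Rightarrow> (int \<Rightarrow> int \<Rightarrow> nat) \<Rightarrow> (int \<Rightarrow> int \<Rightarrow> nat) \<Rightarrow> bool" where
  "orthogonal n A B \<longleftrightarrow> inj_on (\<lambda>(x, y). (A x y, B x y)) ({0..<n} \<times> {0..<n})"

definition sudoku_grid :: "int \<Rightarrow> (int \<Rightarrow> int \<Rightarrow> nat) \<Rightarrow> (int \<Rightarrow> int \<Rightarrow> nat) \<Rightarrow> bool" where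
  "sudoku_grid n I S \<longleftrightarrow> latin_square n S \<and> orthogonal n S I"

definition perfect_sudoku_grids :: "int \<Rightarrow> int \<Rightarrow> (nat \<Rightarrow> int \<times> int) \<Rightarrow> (int \<Rightarrow> int \<Rightarrow> nat) set" where
  "perfect_sudoku_grids n t c = {S. periodic n S \<and> sudoku_grid n (palette n t c) S}"

definition rot :: "int \<Rightarrow> (int \<Rightarrow> int \<Rightarrow> 'a) \<Rightarrow> (int \<Rightarrow> int \<Rightarrow> 'a)" where
  "rot n A = (\<lambda>i j. A (n - 1 - j) i)"

definition tau1_pow :: "int \<Rightarrow> (int \<Rightarrow> int \<Rightarrow> 'a) \<Rightarrow> (int \<Rightarrow> int \<Rightarrow> 'a)" where
  "tau1_pow k A = (\<lambda>i j. A (i - k) j)"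

definition tau2_pow :: "int \<Rightarrow> (int \<Rightarrow> int \<Rightarrow> 'a) \<Rightarrow> (int \<Rightarrow> int \<Rightarrow> 'a)" where
  "tau2_pow k A = (\<lambda>i j. A i (j - k))"

inductive_set gen_group :: "('a \<Rightarrow> 'a) set \<Rightarrow> ('a \<Rightarrow> 'a) set" for F where
  gen_id: "id \<in> gen_group F"
| gen_mult: "f \<in> F \<Longrightarrow> g \<in> gen_group F \<Longrightarrow> f \<circ> g \<in> gen_group F"
| gen_inv: "f \<in> F \<Longrightarrow> g \<in> gen_group F \<Longrightarrow> inv f \<circ> g \<in> gen_group F"

end

theory Submission
  imports Defs "HOL-Library.Product_Plus"
begin

(*
  Both generators act on arrays by pulling back along a motion of Z_n^2: the second one along
  the translation by -(a, b), the first one along the quarter turn (u, v) \<mapsto> (-v, u) about x.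
  Such a motion is a Lee isometry sending rows and columns to rows and columns, so the pulled back
  grid is again a Latin square; and if the motion maps the code C into itself, it maps each
  palette ball onto a palette ball, which preserves orthogonality to the palette.

  The translation clearly preserves C = x + C0. For the quarter turn one needs C0 to be
  closed under (u, v) \<mapsto> (-v, u). Counting shows that the radius-t balls around the n codewords
  tile Z_n^2, so (t+1, 0) and (0, t+1) lie within distance t of codewords of C0; as C0 is cyclic and
  has minimum distance 2t+1, one of these codewords is (t+1, t) or (t, t+1), and such a
  codeword generates a code that is closed under quarter turns.
*)

definition pair_mod :: "int \<Rightarrow> int \<times> int \<Rightarrow> int \<times> int" where
  "pair_mod n p = (fst p mod n, snd p mod n)"

definition l1_norm :: "int \<times> int \<Rightarrow> int" where
  "l1_norm p = \<bar>fst p\<bar> + \<bar>snd p\<bar>"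

lemma pair_mod_eq_iff: "pair_mod n p = pair_mod n q \<longleftrightarrow> fst p mod n = fst q mod n \<and> snd p mod n = snd q mod n"
  by (simp add: pair_mod_def)

lemma pair_mod_idem [simp]: "pair_mod n (pair_mod n p) = pair_mod n p"
  by (simp add: pair_mod_def)

lemma pair_mod_in_Zn2: "n > 0 \<Longrightarrow> pair_mod n p \<in> Zn2 n"
  by (simp add: pair_mod_def Zn2_def)

lemma pair_mod_eq_self: "p \<in> {0..<n} \<times> {0..<n} \<Longrightarrow> pair_mod n p = p"
  by (auto simp: pair_mod_def)

lemma pair_mod_add_cong: "pair_mod n p = pair_mod n p' \<Longrightarrow> pair_mod n (q + p) = pair_mod n (q + p')"
  unfolding pair_mod_eq_iff by (auto intro: mod_add_cong)

lemma pair_mod_eq_if_dvd: "n dvd fst p - fst q \<Longrightarrow> n dvd snd p - snd q \<Longrightarrow> pair_mod n p = pair_mod n q"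
  by (simp add: pair_mod_eq_iff mod_eq_dvd_iff)

lemma eq_if_mod_eq_abs_diff_less:
  fixes x y n :: int
  assumes "x mod n = y mod n" and "\<bar>x - y\<bar> < n"
  shows "x = y"
proof -
  have "n dvd x - y" using assms(1) by (simp add: mod_eq_dvd_iff)
  then show ?thesis using assms(2) dvd_imp_le_int[of "x - y" n] by force
qed

lemma mod_add_left_cancel_iff: "(v + x) mod n = (v + y) mod n \<longleftrightarrow> x mod n = (y :: int) mod n"
  by (simp add: mod_eq_dvd_iff)

lemma mod_uminus_cancel_iff: "(- x) mod n = (- y) mod n \<longleftrightarrow> x mod n = (y :: int) mod n"
  by (simp add: mod_eq_dvd_iff dvd_diff_commute)

lemma lee_wt1_mod [simp]: "lee_wt1 n (z mod n) = lee_wt1 n z"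
  by (simp add: lee_wt1_def)

lemma lee_wt1_cong: "z mod n = w mod n \<Longrightarrow> lee_wt1 n z = lee_wt1 n w"
  by (simp add: lee_wt1_def)

lemma lee_wt1_uminus: "lee_wt1 n (- z) = lee_wt1 n z"
  by (simp add: lee_wt1_def zmod_zminus1_eq_if min.commute)

lemma lee_wt1_nonneg: assumes "n > 0" shows "0 \<le> lee_wt1 n z"
  using pos_mod_bound[OF assms, of z] pos_mod_sign[OF assms, of z] by (simp add: lee_wt1_def)

lemma lee_wt1_eq_0_iff: assumes "n > 0" shows "lee_wt1 n z = 0 \<longleftrightarrow> z mod n = 0"
  using pos_mod_bound[OF assms, of z] pos_mod_sign[OF assms, of z] by (simp add: lee_wt1_def min_def)

lemma lee_wt1_le_abs:
  fixes n z e :: int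
  assumes n: "n > 0" and e: "e mod n = z mod n"
  shows "lee_wt1 n z \<le> \<bar>e\<bar>"
proof (cases "e \<ge> 0")
  case True
  then have "e mod n \<le> e" using n by (simp add: zmod_le_nonneg_dividend)
  then show ?thesis using True e by (simp add: lee_wt1_def)
next
  case False
  then have "e div n < 0" using n by (simp add: div_neg_pos_less0)
  then have "e div n \<le> -1" by simp
  then have "n * (e div n) \<le> - n" using n by (metis mult.commute mult_minus1 mult_right_mono less_le)
  then have "n - e mod n \<le> - e" using mult_div_mod_eq[of n e] by linarith
  then show ?thesis using False e by (simp add: lee_wt1_def)
qed

lemma lee_wt1_attained:
  fixes n z :: int
  assumes n: "n > 0"
  shows "\<exists>e. e mod n = z mod n \<and> \<bar>e\<bar> = lee_wt1 n z"
proof (cases "z mod n \<le> n - z mod n")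
  case True
  then show ?thesis using n by (intro exI[of _ "z mod n"]) (simp add: lee_wt1_def)
next
  case False
  have "(z mod n - n) mod n = z mod n" by (simp add: mod_diff_right_eq[symmetric])
  moreover have "\<bar>z mod n - n\<bar> = n - z mod n" using pos_mod_bound[of n z] n by linarith
  ultimately show ?thesis using False by (intro exI[of _ "z mod n - n"]) (simp add: lee_wt1_def)
qed

lemma lee_wt1_add_le:
  fixes n z w :: int
  assumes n: "n > 0"
  shows "lee_wt1 n (z + w) \<le> lee_wt1 n z + lee_wt1 n w"
proof -
  obtain e where e: "e mod n = z mod n" "\<bar>e\<bar> = lee_wt1 n z" using lee_wt1_attained[OF n] by blast
  obtain e' where e': "e' mod n = w mod n" "\<bar>e'\<bar> = lee_wt1 n w" using lee_wt1_attained[OF n] by blast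
  have "(e + e') mod n = (z + w) mod n" using e(1) e'(1) by (rule mod_add_cong)
  then have "lee_wt1 n (z + w) \<le> \<bar>e + e'\<bar>" by (rule lee_wt1_le_abs[OF n])
  then show ?thesis using e(2) e'(2) abs_triangle_ineq[of e e'] by linarith
qed

lemma lee_dist_eq: "lee_dist n p q = lee_wt1 n (fst p - fst q) + lee_wt1 n (snd p - snd q)"
  by (simp add: lee_dist_def lee_wt_def)

lemma lee_dist_cong:
  assumes "pair_mod n p = pair_mod n p'" and "pair_mod n q = pair_mod n q'"
  shows "lee_dist n p q = lee_dist n p' q'"
proof -
  have "(fst p - fst q) mod n = (fst p' - fst q') mod n" "(snd p - snd q) mod n = (snd p' - snd q') mod n"
    using assms by (auto simp: pair_mod_eq_iff intro: mod_diff_cong)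
  then show ?thesis
    using lee_wt1_cong[of "fst p - fst q" n "fst p' - fst q'"] lee_wt1_cong[of "snd p - snd q" n "snd p' - snd q'"]
    by (simp add: lee_dist_eq)
qed

lemma lee_dist_add_right [simp]: "lee_dist n (p + v) (q + v) = lee_dist n p q"
  by (simp add: lee_dist_eq)

lemma lee_dist_add_left [simp]: "lee_dist n (v + p) (v + q) = lee_dist n p q"
  by (simp add: lee_dist_eq)

lemma lee_dist_uminus [simp]: "lee_dist n (- p) (- q) = lee_dist n p q"
  using lee_wt1_uminus[of n "fst p - fst q"] lee_wt1_uminus[of n "snd p - snd q"]
  by (simp add: lee_dist_eq)

lemma lee_dist_diff_left [simp]: "lee_dist n (v - p) (v - q) = lee_dist n p q"
  by (simp only: diff_conv_add_uminus lee_dist_add_left lee_dist_uminus)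

lemma lee_dist_commute: "lee_dist n p q = lee_dist n q p"
  using lee_wt1_uminus[of n "fst q - fst p"] lee_wt1_uminus[of n "snd q - snd p"]
  by (simp add: lee_dist_eq)

lemma lee_dist_triangle:
  assumes "n > 0"
  shows "lee_dist n p r \<le> lee_dist n p q + lee_dist n q r"
  using lee_wt1_add_le[OF assms, of "fst p - fst q" "fst q - fst r"]
    lee_wt1_add_le[OF assms, of "snd p - snd q" "snd q - snd r"]
  by (simp add: lee_dist_eq)

lemma lee_dist_eq_0_iff:
  assumes "n > 0"
  shows "lee_dist n p q = 0 \<longleftrightarrow> pair_mod n p = pair_mod n q"
proof -
  have diff_mod: "(x - y) mod n = 0 \<longleftrightarrow> x mod n = y mod n" for x y :: int
    by (metis mod_eq_dvd_iff dvd_eq_mod_eq_0)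
  show ?thesis
    using lee_wt1_nonneg[OF assms, of "fst p - fst q"] lee_wt1_nonneg[OF assms, of "snd p - snd q"]
      lee_wt1_eq_0_iff[OF assms, of "fst p - fst q"] lee_wt1_eq_0_iff[OF assms, of "snd p - snd q"]
    by (simp add: lee_dist_eq add_nonneg_eq_0_iff diff_mod pair_mod_eq_iff)
qed

lemma lee_dist_le_l1_norm:
  assumes "n > 0" and "pair_mod n d = pair_mod n (p - q)"
  shows "lee_dist n p q \<le> l1_norm d"
  using assms lee_wt1_le_abs[OF assms(1), of "fst d" "fst p - fst q"]
    lee_wt1_le_abs[OF assms(1), of "snd d" "snd p - snd q"]
  by (simp add: lee_dist_eq l1_norm_def pair_mod_eq_iff)

lemma lee_dist_attained:
  assumes "n > 0"
  shows "\<exists>d. pair_mod n d = pair_mod n (p - q) \<and> l1_norm d = lee_dist n p q"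
proof -
  obtain e where e: "e mod n = (fst p - fst q) mod n" "\<bar>e\<bar> = lee_wt1 n (fst p - fst q)"
    using lee_wt1_attained[OF assms] by blast
  obtain e' where e': "e' mod n = (snd p - snd q) mod n" "\<bar>e'\<bar> = lee_wt1 n (snd p - snd q)"
    using lee_wt1_attained[OF assms] by blast
  show ?thesis
    using e e' by (intro exI[of _ "(e, e')"]) (simp add: pair_mod_eq_iff l1_norm_def lee_dist_eq)
qed

lemma mem_lee_ball_pair_mod:
  assumes "n > 0"
  shows "pair_mod n p \<in> lee_ball n t q \<longleftrightarrow> lee_dist n p q \<le> t"
  using pair_mod_in_Zn2[OF assms] lee_dist_cong[of n "pair_mod n p" p q q]
  by (simp add: lee_ball_def)

subsection \<open>Lee balls and perfect codes\<close>

lemma card_l1_ball_ge: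
  fixes t :: int
  assumes t: "0 \<le> t"
  shows "nat (2 * t\<^sup>2 + 2 * t + 1) \<le> card {d :: int \<times> int. l1_norm d \<le> t}"
proof -
  define D where "D = {d :: int \<times> int. l1_norm d \<le> t}"
  \<comment> \<open>The points of \<open>D\<close> with \<open>fst d + snd d + t\<close> even, resp. odd, are images of two squares.\<close>
  define h where "h = (\<lambda>s (i, j). (i - j, i + j - t + s :: int))"
  define A where "A = {0..t} \<times> {0..t}"
  define B where "B = {0..t - 1} \<times> {0..t - 1}"
  have inj: "inj_on (h s) X" for s X
    by (rule inj_onI) (auto simp: h_def)
  have disjoint: "h 0 ` A \<inter> h 1 ` B = {}"
    by (auto simp: h_def) presburger
  have "finite D"
    by (rule finite_subset[of _ "{-t..t} \<times> {-t..t}"]) (auto simp: D_def l1_norm_def)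
  moreover have "h 0 ` A \<union> h 1 ` B \<subseteq> D"
    by (auto simp: h_def A_def B_def D_def l1_norm_def)
  ultimately have "card (h 0 ` A \<union> h 1 ` B) \<le> card D"
    by (rule card_mono)
  moreover have "card (h 0 ` A \<union> h 1 ` B) = nat (t + 1) * nat (t + 1) + nat t * nat t"
    using disjoint by (simp add: card_Un_disjoint card_image[OF inj] A_def B_def card_cartesian_product)
  moreover have "nat (t + 1) * nat (t + 1) + nat t * nat t = nat (2 * t\<^sup>2 + 2 * t + 1)"
    using t by (simp add: power2_eq_square nat_mult_distrib[symmetric] nat_add_distrib[symmetric] algebra_simps)
  ultimately show ?thesis unfolding D_def by simp
qed

lemma card_lee_ball_ge:
  fixes n t :: int
  assumes t: "0 \<le> t" and n: "2 * t < n"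
  shows "nat (2 * t\<^sup>2 + 2 * t + 1) \<le> card (lee_ball n t v)"
proof -
  define D where "D = {d :: int \<times> int. l1_norm d \<le> t}"
  have n_pos: "n > 0" using t n by linarith
  have "inj_on (\<lambda>d. pair_mod n (v + d)) D"
  proof (rule inj_onI)
    fix d d' assume "d \<in> D" "d' \<in> D" and eq: "pair_mod n (v + d) = pair_mod n (v + d')"
    then have "\<bar>fst d - fst d'\<bar> < n" "\<bar>snd d - snd d'\<bar> < n"
      using n by (auto simp: D_def l1_norm_def)
    moreover have "(fst v + fst d) mod n = (fst v + fst d') mod n" "(snd v + snd d) mod n = (snd v + snd d') mod n"
      using eq by (simp_all add: pair_mod_eq_iff)
    ultimately show "d = d'"
      using eq_if_mod_eq_abs_diff_less[of "fst v + fst d" n "fst v + fst d'"]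
        eq_if_mod_eq_abs_diff_less[of "snd v + snd d" n "snd v + snd d'"]
      by (simp add: prod_eq_iff)
  qed
  moreover have "(\<lambda>d. pair_mod n (v + d)) ` D \<subseteq> lee_ball n t v"
  proof (rule image_subsetI)
    fix d assume "d \<in> D"
    have "lee_dist n (v + d) v \<le> l1_norm d"
      by (rule lee_dist_le_l1_norm[OF n_pos]) simp
    then show "pair_mod n (v + d) \<in> lee_ball n t v"
      using \<open>d \<in> D\<close> by (simp add: mem_lee_ball_pair_mod[OF n_pos] D_def)
  qed
  moreover have "finite (lee_ball n t v)"
    by (rule finite_subset[of _ "Zn2 n"]) (auto simp: lee_ball_def Zn2_def)
  ultimately have "card D \<le> card (lee_ball n t v)"
    by (metis card_image card_mono)
  then show ?thesis using card_l1_ball_ge[OF t] unfolding D_def by linarith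
qed

definition lee_tiling :: "int \<Rightarrow> int \<Rightarrow> (int \<times> int) set \<Rightarrow> bool" where
  "lee_tiling n t C \<longleftrightarrow> (\<forall>p. \<exists>!q \<in> C. lee_dist n p q \<le> t)"

definition lee_packing :: "int \<Rightarrow> int \<Rightarrow> (int \<times> int) set \<Rightarrow> bool" where
  "lee_packing n t C \<longleftrightarrow> (\<forall>q\<in>C. \<forall>q'\<in>C. q \<noteq> q' \<longrightarrow> 2 * t + 1 \<le> lee_dist n q q')"

lemma lee_packing_if_t_error_correcting:
  assumes "t_error_correcting n t C" and "finite C"
  shows "lee_packing n t C"
  unfolding lee_packing_def
proof (intro ballI impI)
  fix p q assume "p \<in> C" "q \<in> C" "p \<noteq> q"
  have "finite {lee_dist n u v | u v. u \<in> C \<and> v \<in> C \<and> u \<noteq> v}"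
    by (rule finite_subset[of _ "(\<lambda>(u, v). lee_dist n u v) ` (C \<times> C)"]) (use assms(2) in auto)
  moreover have "lee_dist n p q \<in> {lee_dist n u v | u v. u \<in> C \<and> v \<in> C \<and> u \<noteq> v}"
    using \<open>p \<in> C\<close> \<open>q \<in> C\<close> \<open>p \<noteq> q\<close> by blast
  ultimately have "min_lee_dist n C \<le> lee_dist n p q"
    unfolding min_lee_dist_def by (rule Min_le)
  then show "2 * t + 1 \<le> lee_dist n p q" using assms(1) by (simp add: t_error_correcting_def)
qed

lemma lee_ball_unique:
  assumes n: "n > 0"
    and packing: "lee_packing n t C"
    and "q \<in> C" "q' \<in> C" "lee_dist n p q \<le> t" "lee_dist n p q' \<le> t"
  shows "q = q'"
proof (rule ccontr)
  assume "q \<noteq> q'"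
  have "lee_dist n q q' \<le> lee_dist n q p + lee_dist n p q'"
    by (rule lee_dist_triangle[OF n])
  then show False
    using packing \<open>q \<noteq> q'\<close> assms(3-6) lee_dist_commute[of n q p]
    unfolding lee_packing_def by fastforce
qed

lemma lee_tiling_if_lee_packing:
  fixes n t :: int
  assumes t: "0 \<le> t" and n: "n = 2 * t\<^sup>2 + 2 * t + 1"
    and C: "C \<subseteq> Zn2 n" "card C = nat n"
    and packing: "lee_packing n t C"
  shows "lee_tiling n t C"
proof -
  have two_t: "2 * t < n" using t n by (simp add: power2_eq_square)
  then have n_pos: "n > 0" using t by linarith
  have finite_Zn2: "finite (Zn2 n)" by (simp add: Zn2_def)
  have balls_sub: "(\<Union>q\<in>C. lee_ball n t q) \<subseteq> Zn2 n"
    by (auto simp: lee_ball_def)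
  have "nat n * nat n = (\<Sum>q\<in>C. nat n)" using C(2) by simp
  also have "\<dots> \<le> (\<Sum>q\<in>C. card (lee_ball n t q))"
    using card_lee_ball_ge[OF t two_t] n by (intro sum_mono) simp
  also have "\<dots> = card (\<Union>q\<in>C. lee_ball n t q)"
  proof (rule card_UN_disjoint[symmetric])
    show "finite C" using C(1) finite_Zn2 by (rule finite_subset)
    show "\<forall>q\<in>C. finite (lee_ball n t q)"
      using finite_Zn2 by (auto simp: lee_ball_def)
    show "\<forall>q\<in>C. \<forall>q'\<in>C. q \<noteq> q' \<longrightarrow> lee_ball n t q \<inter> lee_ball n t q' = {}"
      using lee_ball_unique[OF n_pos packing] by (fastforce simp: lee_ball_def)
  qed
  finally have "card (Zn2 n) \<le> card (\<Union>q\<in>C. lee_ball n t q)"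
    by (simp add: Zn2_def card_cartesian_product)
  then have cover: "(\<Union>q\<in>C. lee_ball n t q) = Zn2 n"
    using card_seteq[OF finite_Zn2 balls_sub] by blast
  show ?thesis
    unfolding lee_tiling_def
  proof
    fix p
    obtain q where "q \<in> C" "pair_mod n p \<in> lee_ball n t q"
      using cover pair_mod_in_Zn2[OF n_pos, of p] by blast
    then have "q \<in> C \<and> lee_dist n p q \<le> t"
      by (simp add: mem_lee_ball_pair_mod[OF n_pos])
    then show "\<exists>!q\<in>C. lee_dist n p q \<le> t"
      using lee_ball_unique[OF n_pos packing, of _ _ p] by blast
  qed
qed

lemma translate_code_eq: "translate_code n x C = (\<lambda>q. pair_mod n (x + q)) ` C"
  unfolding translate_code_def pair_mod_def by force

lemma span1_eq: "span1 n a b = {pair_mod n (k * a, k * b) | k. True}"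
  by (simp add: span1_def pair_mod_def)

lemma lee_packing_translate_code:
  assumes "lee_packing n t C"
  shows "lee_packing n t (translate_code n x C)"
proof -
  have "lee_dist n (pair_mod n (x + q)) (pair_mod n (x + q')) = lee_dist n q q'" for q q'
    using lee_dist_cong[of n "pair_mod n (x + q)" "q + x" "pair_mod n (x + q')" "q' + x"]
    by (simp add: add.commute)
  then show ?thesis using assms by (auto simp: translate_code_eq lee_packing_def)
qed

subsection \<open>Sudoku grids moved by Lee isometries\<close>

definition pullback :: "(int \<times> int \<Rightarrow> int \<times> int) \<Rightarrow> (int \<Rightarrow> int \<Rightarrow> 'a) \<Rightarrow> int \<Rightarrow> int \<Rightarrow> 'a" where
  "pullback \<phi> A i j = case_prod A (\<phi> (i, j))"

definition aligned :: "int \<Rightarrow> int \<times> int \<Rightarrow> int \<times> int \<Rightarrow> bool" where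
  "aligned n p q \<longleftrightarrow> fst p mod n = fst q mod n \<or> snd p mod n = snd q mod n"

definition lee_isometry :: "int \<Rightarrow> (int \<times> int \<Rightarrow> int \<times> int) \<Rightarrow> bool" where
  "lee_isometry n \<phi> \<longleftrightarrow> (\<forall>p q. lee_dist n (\<phi> p) (\<phi> q) = lee_dist n p q)"

definition preserves_alignment :: "int \<Rightarrow> (int \<times> int \<Rightarrow> int \<times> int) \<Rightarrow> bool" where
  "preserves_alignment n \<phi> \<longleftrightarrow> (\<forall>p q. aligned n p q \<longrightarrow> aligned n (\<phi> p) (\<phi> q))"

lemma case_prod_pullback [simp]: "case_prod (pullback \<phi> A) p = case_prod A (\<phi> p)"
  by (simp add: pullback_def split_beta)

lemma lee_isometry_pair_mod_eq_iff:
  assumes "n > 0" and "lee_isometry n \<phi>"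
  shows "pair_mod n (\<phi> p) = pair_mod n (\<phi> q) \<longleftrightarrow> pair_mod n p = pair_mod n q"
proof -
  have "lee_dist n (\<phi> p) (\<phi> q) = lee_dist n p q"
    using assms(2) unfolding lee_isometry_def by blast
  then show ?thesis using lee_dist_eq_0_iff[OF assms(1)] by metis
qed

lemma periodic_case_prod_pair_mod: "periodic n A \<Longrightarrow> case_prod A (pair_mod n p) = case_prod A p"
  by (simp add: periodic_def pair_mod_def split_beta)

lemma periodic_palette: "periodic n (palette n t c)"
  by (simp add: periodic_def palette_def)

lemma bij_betw_if_inj_on_card_eq:
  assumes "inj_on f A" and "f ` A \<subseteq> B" and "finite B" and "card A = card B"
  shows "bij_betw f A B"
proof -
  have "card (f ` A) = card B" using card_image[OF assms(1)] assms(4) by simp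
  then have "f ` A = B" using card_seteq[OF assms(3) assms(2)] by simp
  with assms(1) show ?thesis by (rule bij_betw_imageI)
qed

lemma latin_squareD:
  fixes S :: "int \<Rightarrow> int \<Rightarrow> nat"
  assumes n: "n > 0" and S: "periodic n S" and latin: "latin_square n S"
  shows "S i j \<in> {1..nat n}"
    and "aligned n p q \<Longrightarrow> case_prod S p = case_prod S q \<Longrightarrow> pair_mod n p = pair_mod n q"
proof -
  have row_bij: "bij_betw (\<lambda>y. S x y) {0..<n} {1..nat n}"
    and col_bij: "bij_betw (\<lambda>y. S y x) {0..<n} {1..nat n}" if "x \<in> {0..<n}" for x
    using latin that by (auto simp: latin_square_def)
  have mod_in: "z mod n \<in> {0..<n}" for z using n by simp
  have S_mod: "case_prod S p = S (fst p mod n) (snd p mod n)" for p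
    using periodic_case_prod_pair_mod[OF S, of p] by (simp add: pair_mod_def split_beta)
  show "S i j \<in> {1..nat n}"
    using bij_betwE[OF row_bij[OF mod_in]] mod_in S_mod[of "(i, j)"] by simp
  assume "aligned n p q" and eq: "case_prod S p = case_prod S q"
  then consider "fst p mod n = fst q mod n" | "snd p mod n = snd q mod n"
    by (auto simp: aligned_def)
  then show "pair_mod n p = pair_mod n q"
  proof cases
    case 1
    then have "snd p mod n = snd q mod n"
      using inj_onD[OF bij_betw_imp_inj_on[OF row_bij[OF mod_in]]] eq S_mod[of p] S_mod[of q] mod_in by simp
    with 1 show ?thesis by (simp add: pair_mod_eq_iff)
  next
    case 2
    then have "fst p mod n = fst q mod n"
      using inj_onD[OF bij_betw_imp_inj_on[OF col_bij[OF mod_in]]] eq S_mod[of p] S_mod[of q] mod_in by simp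
    with 2 show ?thesis by (simp add: pair_mod_eq_iff)
  qed
qed

lemma latin_squareI:
  fixes S :: "int \<Rightarrow> int \<Rightarrow> nat"
  assumes range: "\<And>i j. S i j \<in> {1..nat n}"
    and lines: "\<And>p q. aligned n p q \<Longrightarrow> case_prod S p = case_prod S q \<Longrightarrow> pair_mod n p = pair_mod n q"
  shows "latin_square n S"
proof -
  have card_eq: "card {0..<n} = card {1..nat n}" by simp
  have "bij_betw (\<lambda>y. S x y) {0..<n} {1..nat n}" for x
  proof (rule bij_betw_if_inj_on_card_eq[OF inj_onI _ _ card_eq])
    fix y y' assume "y \<in> {0..<n}" "y' \<in> {0..<n}" "S x y = S x y'"
    then show "y = y'"
      using lines[of "(x, y)" "(x, y')"] by (simp add: aligned_def pair_mod_def)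
  qed (use range in auto)
  moreover have "bij_betw (\<lambda>x. S x y) {0..<n} {1..nat n}" for y
  proof (rule bij_betw_if_inj_on_card_eq[OF inj_onI _ _ card_eq])
    fix x x' assume "x \<in> {0..<n}" "x' \<in> {0..<n}" "S x y = S x' y"
    then show "x = x'"
      using lines[of "(x, y)" "(x', y)"] by (simp add: aligned_def pair_mod_def)
  qed (use range in auto)
  ultimately show ?thesis by (simp add: latin_square_def)
qed

lemma orthogonal_iff:
  fixes S I :: "int \<Rightarrow> int \<Rightarrow> nat"
  assumes n: "n > 0" and S: "periodic n S" and I: "periodic n I"
  shows "orthogonal n S I \<longleftrightarrow>
    (\<forall>p q. case_prod S p = case_prod S q \<longrightarrow> case_prod I p = case_prod I q \<longrightarrow> pair_mod n p = pair_mod n q)"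
proof
  assume "orthogonal n S I"
  then have inj: "inj_on (\<lambda>(x, y). (S x y, I x y)) (Zn2 n)"
    by (simp add: orthogonal_def Zn2_def)
  show "\<forall>p q. case_prod S p = case_prod S q \<longrightarrow> case_prod I p = case_prod I q \<longrightarrow> pair_mod n p = pair_mod n q"
  proof (intro allI impI)
    fix p q assume "case_prod S p = case_prod S q" "case_prod I p = case_prod I q"
    then have "(\<lambda>(x, y). (S x y, I x y)) (pair_mod n p) = (\<lambda>(x, y). (S x y, I x y)) (pair_mod n q)"
      using periodic_case_prod_pair_mod[OF S] periodic_case_prod_pair_mod[OF I] by (simp add: split_beta)
    then show "pair_mod n p = pair_mod n q"
      using inj_onD[OF inj] pair_mod_in_Zn2[OF n] by blast
  qed
next
  assume orth: "\<forall>p q. case_prod S p = case_prod S q \<longrightarrow> case_prod I p = case_prod I q \<longrightarrow> pair_mod n p = pair_mod n q"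
  show "orthogonal n S I"
    unfolding orthogonal_def
  proof (rule inj_onI)
    fix p q assume p: "p \<in> {0..<n} \<times> {0..<n}" and q: "q \<in> {0..<n} \<times> {0..<n}"
      and "(\<lambda>(x, y). (S x y, I x y)) p = (\<lambda>(x, y). (S x y, I x y)) q"
    then have "case_prod S p = case_prod S q" "case_prod I p = case_prod I q"
      by (simp_all add: split_beta)
    then have "pair_mod n p = pair_mod n q" using orth by blast
    then show "p = q" by (simp add: pair_mod_eq_self[OF p] pair_mod_eq_self[OF q])
  qed
qed

lemma palette_eq_iff:
  assumes n: "n > 0" and tiling: "lee_tiling n t C" and c: "bij_betw c {1..nat n} C"
  shows "case_prod (palette n t c) p = i \<longleftrightarrow> i \<in> {1..nat n} \<and> lee_dist n p (c i) \<le> t"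
proof -
  have unique: "\<exists>!i. i \<in> {1..nat n} \<and> lee_dist n p (c i) \<le> t"
  proof -
    obtain q where q: "q \<in> C" "lee_dist n p q \<le> t"
      and q_unique: "\<And>q'. q' \<in> C \<Longrightarrow> lee_dist n p q' \<le> t \<Longrightarrow> q' = q"
      using tiling unfolding lee_tiling_def by blast
    obtain i where i: "i \<in> {1..nat n}" "c i = q"
      using c q(1) by (auto simp: bij_betw_def)
    moreover have "j = i" if "j \<in> {1..nat n}" "lee_dist n p (c j) \<le> t" for j
    proof -
      have "c j = c i" using q_unique[OF bij_betw_apply[OF c that(1)] that(2)] i(2) by simp
      then show ?thesis using inj_onD[OF bij_betw_imp_inj_on[OF c] _ that(1) i(1)] by simp
    qed
    ultimately show ?thesis using q(2) by blast
  qed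
  obtain x y where p: "p = (x, y)" by (cases p)
  have "case_prod (palette n t c) p = (THE i. i \<in> {1..nat n} \<and> pair_mod n p \<in> lee_ball n t (c i))"
    by (simp add: palette_def pair_mod_def p)
  also have "\<dots> = (THE i. i \<in> {1..nat n} \<and> lee_dist n p (c i) \<le> t)"
    by (simp only: mem_lee_ball_pair_mod[OF n])
  finally have palette: "case_prod (palette n t c) p = (THE i. i \<in> {1..nat n} \<and> lee_dist n p (c i) \<le> t)" .
  show ?thesis
  proof
    assume "case_prod (palette n t c) p = i"
    then show "i \<in> {1..nat n} \<and> lee_dist n p (c i) \<le> t"
      using theI'[OF unique] palette by simp
  next
    assume "i \<in> {1..nat n} \<and> lee_dist n p (c i) \<le> t"
    then show "case_prod (palette n t c) p = i"
      using the1_equality[OF unique] palette by simp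
  qed
qed

lemma periodic_pullback:
  assumes n: "n > 0" and A: "periodic n A" and iso: "lee_isometry n \<phi>"
  shows "periodic n (pullback \<phi> A)"
  unfolding periodic_def
proof (intro allI)
  fix i j
  have "pair_mod n (\<phi> (i mod n, j mod n)) = pair_mod n (\<phi> (i, j))"
    by (subst lee_isometry_pair_mod_eq_iff[OF n iso]) (simp add: pair_mod_def)
  then have "case_prod A (\<phi> (i mod n, j mod n)) = case_prod A (\<phi> (i, j))"
    using periodic_case_prod_pair_mod[OF A] by metis
  then show "pullback \<phi> A (i mod n) (j mod n) = pullback \<phi> A i j"
    by (simp add: pullback_def)
qed

lemma latin_square_pullback:
  fixes S :: "int \<Rightarrow> int \<Rightarrow> nat"
  assumes n: "n > 0" and S: "periodic n S" "latin_square n S"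
    and iso: "lee_isometry n \<phi>" and lines: "preserves_alignment n \<phi>"
  shows "latin_square n (pullback \<phi> S)"
proof (rule latin_squareI)
  show "pullback \<phi> S i j \<in> {1..nat n}" for i j
    using latin_squareD(1)[OF n S] by (simp add: pullback_def split_beta)
next
  fix p q assume "aligned n p q" and eq: "case_prod (pullback \<phi> S) p = case_prod (pullback \<phi> S) q"
  then have "aligned n (\<phi> p) (\<phi> q)" using lines unfolding preserves_alignment_def by blast
  then have "pair_mod n (\<phi> p) = pair_mod n (\<phi> q)" using latin_squareD(2)[OF n S] eq by simp
  then show "pair_mod n p = pair_mod n q" by (simp add: lee_isometry_pair_mod_eq_iff[OF n iso])
qed

lemma palette_pullback_eq:
  assumes n: "n > 0" and tiling: "lee_tiling n t C" and c: "bij_betw c {1..nat n} C"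
    and iso: "lee_isometry n \<phi>" and code: "\<forall>q\<in>C. pair_mod n (\<phi> q) \<in> C"
    and eq: "case_prod (palette n t c) p = case_prod (palette n t c) p'"
  shows "case_prod (palette n t c) (\<phi> p) = case_prod (palette n t c) (\<phi> p')"
proof -
  note palette = palette_eq_iff[OF n tiling c]
  define i where "i = case_prod (palette n t c) p"
  have i: "i \<in> {1..nat n}" "lee_dist n p (c i) \<le> t" "lee_dist n p' (c i) \<le> t"
    using palette[of p i] palette[of p' i] eq by (simp_all add: i_def)
  have "pair_mod n (\<phi> (c i)) \<in> c ` {1..nat n}"
    using code bij_betw_apply[OF c i(1)] c by (simp add: bij_betw_def)
  then obtain j where j: "j \<in> {1..nat n}" "c j = pair_mod n (\<phi> (c i))"
    by force
  have "lee_dist n (\<phi> r) (c j) = lee_dist n r (c i)" for r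
  proof -
    have "lee_dist n (\<phi> r) (c j) = lee_dist n (\<phi> r) (\<phi> (c i))"
      using j(2) by (intro lee_dist_cong) (simp_all add: pair_mod_def)
    also have "\<dots> = lee_dist n r (c i)"
      using iso unfolding lee_isometry_def by blast
    finally show ?thesis .
  qed
  then have "case_prod (palette n t c) (\<phi> r) = j" if "lee_dist n r (c i) \<le> t" for r
    using palette j(1) that by simp
  then show ?thesis using i by simp
qed

lemma orthogonal_pullback:
  fixes S :: "int \<Rightarrow> int \<Rightarrow> nat"
  assumes n: "n > 0" and tiling: "lee_tiling n t C" and c: "bij_betw c {1..nat n} C"
    and S: "periodic n S" "orthogonal n S (palette n t c)"
    and iso: "lee_isometry n \<phi>" and code: "\<forall>q\<in>C. pair_mod n (\<phi> q) \<in> C"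
  shows "orthogonal n (pullback \<phi> S) (palette n t c)"
proof -
  note orth_iff = orthogonal_iff[OF n _ periodic_palette]
  have S_orth: "\<forall>p q. case_prod S p = case_prod S q \<longrightarrow> case_prod (palette n t c) p = case_prod (palette n t c) q
      \<longrightarrow> pair_mod n p = pair_mod n q"
    using S(2) unfolding orth_iff[OF S(1)] .
  have "\<forall>p q. case_prod (pullback \<phi> S) p = case_prod (pullback \<phi> S) q
      \<longrightarrow> case_prod (palette n t c) p = case_prod (palette n t c) q \<longrightarrow> pair_mod n p = pair_mod n q"
  proof (intro allI impI)
    fix p q assume eq: "case_prod (pullback \<phi> S) p = case_prod (pullback \<phi> S) q"
      and colour: "case_prod (palette n t c) p = case_prod (palette n t c) q"
    have "case_prod (palette n t c) (\<phi> p) = case_prod (palette n t c) (\<phi> q)"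
      by (rule palette_pullback_eq[OF n tiling c iso code colour])
    then have "pair_mod n (\<phi> p) = pair_mod n (\<phi> q)" using S_orth[rule_format, of "\<phi> p" "\<phi> q"] eq by simp
    then show "pair_mod n p = pair_mod n q" by (simp add: lee_isometry_pair_mod_eq_iff[OF n iso])
  qed
  then show ?thesis unfolding orth_iff[OF periodic_pullback[OF n S(1) iso]] .
qed

lemma pullback_mem_perfect_sudoku_grids:
  assumes n: "n > 0" and tiling: "lee_tiling n t C" and c: "bij_betw c {1..nat n} C"
    and iso: "lee_isometry n \<phi>" and lines: "preserves_alignment n \<phi>"
    and code: "\<forall>q\<in>C. pair_mod n (\<phi> q) \<in> C"
    and S: "S \<in> perfect_sudoku_grids n t c"
  shows "pullback \<phi> S \<in> perfect_sudoku_grids n t c"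
proof -
  have "periodic n S" "latin_square n S" "orthogonal n S (palette n t c)"
    using S by (simp_all add: perfect_sudoku_grids_def sudoku_grid_def)
  then show ?thesis
    using periodic_pullback[OF n _ iso] latin_square_pullback[OF n _ _ iso lines]
      orthogonal_pullback[OF n tiling c _ _ iso code]
    by (simp add: perfect_sudoku_grids_def sudoku_grid_def)
qed

lemma inv_pullback:
  assumes "\<And>p. \<phi> (\<psi> p) = p" and "\<And>p. \<psi> (\<phi> p) = p"
  shows "inv (pullback \<phi>) = pullback \<psi>"
proof (rule inv_equality)
  show "pullback \<psi> (pullback \<phi> A) = A" for A :: "int \<Rightarrow> int \<Rightarrow> 'a"
    by (simp add: fun_eq_iff pullback_def split_beta assms)
  show "pullback \<phi> (pullback \<psi> A) = A" for A :: "int \<Rightarrow> int \<Rightarrow> 'a"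
    by (simp add: fun_eq_iff pullback_def split_beta assms)
qed

lemma gen_group_preserves:
  assumes "g \<in> gen_group F"
    and "\<And>f A. f \<in> F \<Longrightarrow> A \<in> P \<Longrightarrow> f A \<in> P"
    and "\<And>f A. f \<in> F \<Longrightarrow> A \<in> P \<Longrightarrow> inv f A \<in> P"
    and "A \<in> P"
  shows "g A \<in> P"
  using assms(1,4) by (induction arbitrary: A rule: gen_group.induct) (simp_all add: assms(2,3))

definition quarter_turn :: "int \<times> int \<Rightarrow> int \<times> int" where
  "quarter_turn p = (- snd p, fst p)"

lemma lee_dist_quarter_turn [simp]: "lee_dist n (quarter_turn p) (quarter_turn q) = lee_dist n p q"
  using lee_wt1_uminus[of n "snd p - snd q"] by (simp add: lee_dist_eq quarter_turn_def)

lemma aligned_add_left [simp]: "aligned n (v + p) (v + q) \<longleftrightarrow> aligned n p q"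
  by (simp add: aligned_def mod_add_left_cancel_iff)

lemma aligned_uminus [simp]: "aligned n (- p) (- q) \<longleftrightarrow> aligned n p q"
  by (simp add: aligned_def mod_uminus_cancel_iff)

lemma aligned_diff_left [simp]: "aligned n (v - p) (v - q) \<longleftrightarrow> aligned n p q"
  by (simp only: diff_conv_add_uminus aligned_add_left aligned_uminus)

lemma aligned_quarter_turn [simp]: "aligned n (quarter_turn p) (quarter_turn q) \<longleftrightarrow> aligned n p q"
  by (auto simp: aligned_def quarter_turn_def mod_uminus_cancel_iff)

lemma lee_isometry_motions:
  "lee_isometry n (\<lambda>p. p + v)"
  "lee_isometry n (\<lambda>p. v + quarter_turn p)"
  "lee_isometry n (\<lambda>p. v - quarter_turn p)"
  unfolding lee_isometry_def by (simp_all add: add.commute[of _ v])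

lemma preserves_alignment_motions:
  "preserves_alignment n (\<lambda>p. p + v)"
  "preserves_alignment n (\<lambda>p. v + quarter_turn p)"
  "preserves_alignment n (\<lambda>p. v - quarter_turn p)"
  unfolding preserves_alignment_def by (simp_all add: add.commute[of _ v])

subsection \<open>Linear perfect codes are invariant under quarter turns\<close>

lemma dvd_if_dvd_mult_invertible:
  fixes n u v x :: int
  assumes "n dvd u * x" and "n dvd u * v + 1"
  shows "n dvd x"
proof -
  have "n dvd (u * v + 1) * x - v * (u * x)"
    by (rule dvd_diff[OF dvd_mult2[OF assms(2)] dvd_mult[OF assms(1)]])
  also have "(u * v + 1) * x - v * (u * x) = x"
    by (simp add: algebra_simps)
  finally show ?thesis .
qed

lemma span_quarter_turn_if_generator:
  fixes t n a b k :: int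
  assumes n: "n = 2 * t\<^sup>2 + 2 * t + 1"
    and gen: "n dvd (t + 1) - k * a" "n dvd t - k * b"
  shows "\<exists>m. n dvd m * a + b \<and> n dvd m * b - a"
proof -
  \<comment> \<open>The quarter turn \<open>(-t, t+1)\<close> of the generator \<open>(t+1, t)\<close> is \<open>-(2t+1)\<close> times it.\<close>
  define m where "m = - (2 * t + 1)"
  define D where "D = (t + 1) * b - t * a"
  have "D = ((t + 1) - k * a) * b - (t - k * b) * a"
    by (simp add: D_def algebra_simps)
  then have D: "n dvd D"
    using gen by (simp add: dvd_diff dvd_mult2)
  have unit: "n dvd (t + 1) * (2 * t) + 1"
    by (simp add: n power2_eq_square algebra_simps)
  have "n dvd D - n * a"
    using dvd_diff[OF D dvd_triv_left] .
  also have "D - n * a = (t + 1) * (m * a + b)"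
    by (simp add: D_def m_def n power2_eq_square algebra_simps)
  finally have "n dvd m * a + b"
    using unit by (rule dvd_if_dvd_mult_invertible)
  moreover have "n dvd m * D - n * a"
    using dvd_diff[OF dvd_mult[OF D] dvd_triv_left] .
  moreover have "m * D - n * a = (t + 1) * (m * b - a)"
    by (simp add: D_def m_def n power2_eq_square algebra_simps)
  ultimately show ?thesis
    using unit dvd_if_dvd_mult_invertible by metis
qed

lemma det_same_orientation_not_dvd:
  fixes t n \<alpha> \<beta> :: int
  assumes t: "1 \<le> t" and n: "n = 2 * t\<^sup>2 + 2 * t + 1"
    and \<alpha>: "0 \<le> \<alpha>" "\<alpha> \<le> t" and \<beta>: "0 \<le> \<beta>" "\<beta> \<le> t"
  shows "\<not> n dvd (t + 1 + \<alpha>) * (t + 1 + \<beta>) - (t - \<alpha>) * (t - \<beta>)"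
proof
  assume "n dvd (t + 1 + \<alpha>) * (t + 1 + \<beta>) - (t - \<alpha>) * (t - \<beta>)"
  also have "(t + 1 + \<alpha>) * (t + 1 + \<beta>) - (t - \<alpha>) * (t - \<beta>) = (2 * t + 1) * (1 + \<alpha> + \<beta>)"
    by (simp add: algebra_simps)
  finally have "n dvd (2 * t + 1) * (1 + \<alpha> + \<beta>)" .
  moreover have "n dvd (2 * t + 1) * (2 * t + 1) + 1"
    using dvd_triv_left[of n 2] by (simp add: n power2_eq_square algebra_simps)
  ultimately have "n dvd 1 + \<alpha> + \<beta>"
    by (rule dvd_if_dvd_mult_invertible)
  then have "n \<le> 1 + \<alpha> + \<beta>"
    using \<alpha> \<beta> by (intro zdvd_imp_le) simp_all
  moreover have "t * 1 \<le> t * t"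
    using t by (intro mult_left_mono) simp_all
  ultimately show False
    using \<alpha> \<beta> t unfolding n power2_eq_square by linarith
qed

lemma det_opposite_orientation_dvd_imp:
  fixes t n \<alpha> \<beta> :: int
  assumes n: "n = 2 * t\<^sup>2 + 2 * t + 1"
    and \<alpha>: "0 \<le> \<alpha>" "\<alpha> \<le> t" and \<beta>: "0 \<le> \<beta>" "\<beta> \<le> t"
    and dvd: "n dvd (t + 1 + \<alpha>) * (t + 1 + \<beta>) + (t - \<alpha>) * (t - \<beta>)"
  shows "\<alpha> = 0 \<and> \<beta> = 0"
proof -
  define s where "s = \<alpha> + \<beta> + 2 * (\<alpha> * \<beta>)"
  have "(t + 1 + \<alpha>) * (t + 1 + \<beta>) + (t - \<alpha>) * (t - \<beta>) = n + s"
    by (simp add: s_def n power2_eq_square algebra_simps)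
  then have "n dvd s"
    using dvd by (simp add: dvd_add_right_iff)
  have \<alpha>\<beta>: "0 \<le> \<alpha> * \<beta>" "\<alpha> * \<beta> \<le> t * t"
    using \<alpha> \<beta> by (simp_all add: mult_mono)
  have "s = 0"
  proof (rule ccontr)
    assume "s \<noteq> 0"
    then have "0 < s" using \<alpha> \<beta> \<alpha>\<beta> unfolding s_def by linarith
    then have "n \<le> s" using zdvd_imp_le[OF \<open>n dvd s\<close>] by simp
    then show False using \<alpha> \<beta> \<alpha>\<beta> n unfolding s_def power2_eq_square by linarith
  qed
  then show ?thesis
    using \<alpha> \<beta> \<alpha>\<beta> unfolding s_def by linarith
qed

text \<open>\<open>u\<close> and \<open>w\<close> are the codewords covering \<open>(t+1, 0)\<close> and \<open>(0, t+1)\<close>; since the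
  code is cyclic, their determinant vanishes modulo \<open>n\<close>.\<close>

lemma axis_codewords_cases:
  fixes t n :: int and u w :: "int \<times> int"
  assumes t: "1 \<le> t" and n: "n = 2 * t\<^sup>2 + 2 * t + 1"
    and u: "l1_norm (u - (t + 1, 0)) \<le> t" "2 * t + 1 \<le> l1_norm u"
    and w: "l1_norm (w - (0, t + 1)) \<le> t" "2 * t + 1 \<le> l1_norm w"
    and det: "n dvd fst u * snd w - snd u * fst w"
  shows "u = (t + 1, t) \<or> w = (t, t + 1)"
proof -
  obtain u1 u2 w1 w2 where uw: "u = (u1, u2)" "w = (w1, w2)"
    by (cases u, cases w)
  define \<alpha> where "\<alpha> = u1 - (t + 1)"
  define \<beta> where "\<beta> = w2 - (t + 1)"
  have "\<bar>u1 - (t + 1)\<bar> + \<bar>u2\<bar> \<le> t" "2 * t + 1 \<le> \<bar>u1\<bar> + \<bar>u2\<bar>"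
    "\<bar>w1\<bar> + \<bar>w2 - (t + 1)\<bar> \<le> t" "2 * t + 1 \<le> \<bar>w1\<bar> + \<bar>w2\<bar>"
    using u w by (simp_all add: uw l1_norm_def)
  then have \<alpha>: "0 \<le> \<alpha>" "\<alpha> \<le> t" "\<bar>u2\<bar> = t - \<alpha>" and \<beta>: "0 \<le> \<beta>" "\<beta> \<le> t" "\<bar>w1\<bar> = t - \<beta>"
    unfolding \<alpha>_def \<beta>_def by arith+
  have det': "n dvd (t + 1 + \<alpha>) * (t + 1 + \<beta>) - u2 * w1"
    using det by (simp add: uw \<alpha>_def \<beta>_def)
  have abs_u2w1: "\<bar>u2 * w1\<bar> = (t - \<alpha>) * (t - \<beta>)"
    by (simp add: abs_mult \<alpha>(3) \<beta>(3))
  show ?thesis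
  proof (cases "0 \<le> u2 * w1")
    case True
    then have "u2 * w1 = (t - \<alpha>) * (t - \<beta>)"
      using abs_u2w1 by simp
    then show ?thesis
      using det' det_same_orientation_not_dvd[OF t n \<alpha>(1,2) \<beta>(1,2)] by simp
  next
    case False
    then have "u2 * w1 = - ((t - \<alpha>) * (t - \<beta>))"
      using abs_u2w1 by simp
    then have "\<alpha> = 0 \<and> \<beta> = 0"
      using det' det_opposite_orientation_dvd_imp[OF n \<alpha>(1,2) \<beta>(1,2)] by simp
    moreover have "u2 = t \<or> w1 = t"
      using False \<alpha>(3) \<beta>(3) t calculation by (auto simp: abs_if mult_less_0_iff split: if_splits)
    ultimately show ?thesis
      by (auto simp: uw \<alpha>_def \<beta>_def)
  qed
qed

lemma representative_near_if_lee_dist_le: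
  fixes n t :: int and y u :: "int \<times> int"
  assumes n: "n > 0" and near: "lee_dist n y u \<le> t" and far: "t < lee_dist n y 0"
    and weight: "pair_mod n u \<noteq> pair_mod n 0 \<Longrightarrow> 2 * t + 1 \<le> lee_dist n u 0"
  shows "\<exists>u'. pair_mod n u' = pair_mod n u \<and> l1_norm (u' - y) \<le> t \<and> 2 * t + 1 \<le> l1_norm u'"
proof -
  obtain d where d: "pair_mod n d = pair_mod n (u - y)" "l1_norm d = lee_dist n u y"
    using lee_dist_attained[OF n] by blast
  have u': "pair_mod n (y + d) = pair_mod n u"
    using pair_mod_add_cong[OF d(1), of y] by simp
  have "pair_mod n u \<noteq> pair_mod n 0"
    using near far lee_dist_cong[of n y y u 0] by auto
  then have "2 * t + 1 \<le> lee_dist n (y + d) 0"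
    using weight lee_dist_cong[OF u', of 0] by simp
  also have "\<dots> \<le> l1_norm (y + d)"
    by (rule lee_dist_le_l1_norm[OF n]) simp
  finally show ?thesis
    using u' d(2) near lee_dist_commute[of n u y] by (intro exI[of _ "y + d"]) simp
qed

lemma dvd_det_if_multiples:
  fixes n a b k k' :: int and u w :: "int \<times> int"
  assumes "pair_mod n u = pair_mod n (k * a, k * b)" and "pair_mod n w = pair_mod n (k' * a, k' * b)"
  shows "n dvd fst u * snd w - snd u * fst w"
proof -
  have "(fst u * snd w) mod n = ((k * a) * (k' * b)) mod n"
    "(snd u * fst w) mod n = ((k * b) * (k' * a)) mod n"
    using assms by (auto simp: pair_mod_eq_iff intro: mod_mult_cong)
  moreover have "(k * a) * (k' * b) = (k * b) * (k' * a)"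
    by (simp add: algebra_simps)
  ultimately have "(fst u * snd w) mod n = (snd u * fst w) mod n"
    by simp
  then show ?thesis by (simp add: mod_eq_dvd_iff)
qed

locale perfect_lee_code =
  fixes t n a b x1 x2 :: int and c :: "nat \<Rightarrow> int \<times> int"
  assumes t_ge_1: "1 \<le> t"
    and n_eq: "n = 2 * t\<^sup>2 + 2 * t + 1"
    and error_correcting: "t_error_correcting n t (span1 n a b)"
    and enumeration: "bij_betw c {1..nat n} (translate_code n (x1, x2) (span1 n a b))"
begin

abbreviation code :: "(int \<times> int) set" where
  "code \<equiv> translate_code n (x1, x2) (span1 n a b)"

lemma n_gt: "2 * t + 1 < n"
proof -
  have "t * 1 \<le> t * t" using t_ge_1 by (intro mult_left_mono) simp_all
  then show ?thesis using t_ge_1 unfolding n_eq power2_eq_square by linarith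
qed

lemma n_pos: "n > 0"
  using n_gt t_ge_1 by linarith

lemma mem_code_iff: "q \<in> code \<longleftrightarrow> (\<exists>k. q = pair_mod n (x1 + k * a, x2 + k * b))"
proof -
  have eq: "pair_mod n ((x1, x2) + pair_mod n (k * a, k * b)) = pair_mod n (x1 + k * a, x2 + k * b)" for k
    using pair_mod_add_cong[of n "pair_mod n (k * a, k * b)" "(k * a, k * b)" "(x1, x2)"] by simp
  show ?thesis
  proof
    assume "q \<in> code"
    then obtain k where "q = pair_mod n ((x1, x2) + pair_mod n (k * a, k * b))"
      by (auto simp: translate_code_eq span1_eq)
    then show "\<exists>k. q = pair_mod n (x1 + k * a, x2 + k * b)" by (auto simp: eq)
  next
    assume "\<exists>k. q = pair_mod n (x1 + k * a, x2 + k * b)"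
    then obtain k where q: "q = pair_mod n (x1 + k * a, x2 + k * b)" by blast
    show "q \<in> code"
      unfolding translate_code_eq
      by (rule image_eqI[of _ _ "pair_mod n (k * a, k * b)"]) (auto simp: q eq span1_eq)
  qed
qed

lemma span_packing: "lee_packing n t (span1 n a b)"
proof -
  have "span1 n a b \<subseteq> Zn2 n"
    using n_pos by (auto simp: span1_def Zn2_def)
  then have "finite (span1 n a b)"
    by (rule finite_subset) (simp add: Zn2_def)
  then show ?thesis
    by (rule lee_packing_if_t_error_correcting[OF error_correcting])
qed

lemma code_tiling: "lee_tiling n t code"
proof (rule lee_tiling_if_lee_packing[OF _ n_eq])
  show "0 \<le> t" using t_ge_1 by simp
  show "code \<subseteq> Zn2 n"
    using pair_mod_in_Zn2[OF n_pos] by (auto simp: translate_code_eq)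
  show "card code = nat n"
    using bij_betw_same_card[OF enumeration] by simp
  show "lee_packing n t code"
    by (rule lee_packing_translate_code[OF span_packing])
qed

lemma lee_dist_multiple_ge:
  assumes "pair_mod n (k * a, k * b) \<noteq> pair_mod n 0"
  shows "2 * t + 1 \<le> lee_dist n (k * a, k * b) 0"
proof -
  have "pair_mod n 0 = pair_mod n (0 * a, 0 * b)"
    by (simp add: zero_prod_def)
  then have "pair_mod n (k * a, k * b) \<in> span1 n a b" "pair_mod n 0 \<in> span1 n a b"
    unfolding span1_eq by blast+
  then have "2 * t + 1 \<le> lee_dist n (pair_mod n (k * a, k * b)) (pair_mod n 0)"
    using span_packing assms unfolding lee_packing_def by blast
  then show ?thesis
    using lee_dist_cong[of n "pair_mod n (k * a, k * b)" "(k * a, k * b)" "pair_mod n 0" 0] by simp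
qed

lemma span_representative_near:
  assumes far: "t < lee_dist n y 0"
  shows "\<exists>k u. pair_mod n u = pair_mod n (k * a, k * b) \<and> l1_norm (u - y) \<le> t \<and> 2 * t + 1 \<le> l1_norm u"
proof -
  obtain q where "q \<in> code" "lee_dist n ((x1, x2) + y) q \<le> t"
    using code_tiling unfolding lee_tiling_def by blast
  then obtain k where "lee_dist n ((x1, x2) + y) (pair_mod n (x1 + k * a, x2 + k * b)) \<le> t"
    by (auto simp: mem_code_iff)
  then have "lee_dist n y (k * a, k * b) \<le> t"
    using lee_dist_cong[of n "(x1, x2) + y" "(x1, x2) + y" "pair_mod n (x1 + k * a, x2 + k * b)" "(x1 + k * a, x2 + k * b)"]
      lee_dist_add_left[of n "(x1, x2)" y "(k * a, k * b)"]
    by simp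
  then show ?thesis
    using representative_near_if_lee_dist_le[OF n_pos _ far lee_dist_multiple_ge] by blast
qed

lemma span_quarter_turn: "\<exists>m. n dvd m * a + b \<and> n dvd m * b - a"
proof -
  have axis: "lee_wt1 n (t + 1) = t + 1"
    using n_gt t_ge_1 by (simp add: lee_wt1_def mod_pos_pos_trivial)
  have far: "t < lee_dist n (t + 1, 0) 0" "t < lee_dist n (0, t + 1) 0"
    using axis lee_wt1_eq_0_iff[OF n_pos, of 0] by (simp_all add: lee_dist_eq)
  obtain k u where u: "pair_mod n u = pair_mod n (k * a, k * b)"
    "l1_norm (u - (t + 1, 0)) \<le> t" "2 * t + 1 \<le> l1_norm u"
    using span_representative_near[OF far(1)] by blast
  obtain k' w where w: "pair_mod n w = pair_mod n (k' * a, k' * b)"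
    "l1_norm (w - (0, t + 1)) \<le> t" "2 * t + 1 \<le> l1_norm w"
    using span_representative_near[OF far(2)] by blast
  from axis_codewords_cases[OF t_ge_1 n_eq u(2,3) w(2,3) dvd_det_if_multiples[OF u(1) w(1)]]
  show ?thesis
  proof
    assume "u = (t + 1, t)"
    then have "n dvd (t + 1) - k * a" "n dvd t - k * b"
      using u(1) by (simp_all add: pair_mod_eq_iff mod_eq_dvd_iff)
    then show ?thesis by (rule span_quarter_turn_if_generator[OF n_eq])
  next
    assume "w = (t, t + 1)"
    \<comment> \<open>This is the first case with the roles of \<open>a\<close> and \<open>b\<close> exchanged.\<close>
    then have "n dvd (t + 1) - k' * b" "n dvd t - k' * a"
      using w(1) by (simp_all add: pair_mod_eq_iff mod_eq_dvd_iff)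
    then obtain m where "n dvd m * b + a" "n dvd m * a - b"
      using span_quarter_turn_if_generator[OF n_eq] by blast
    moreover have "(- m) * a + b = - (m * a - b)" "(- m) * b - a = - (m * b + a)"
      by simp_all
    ultimately show ?thesis
      by (metis dvd_minus_iff)
  qed
qed

lemma pullback_mem_if_preserves_code:
  assumes iso: "lee_isometry n \<phi>" and lines: "preserves_alignment n \<phi>"
    and maps: "\<And>k. \<exists>k'. pair_mod n (\<phi> (x1 + k * a, x2 + k * b)) = pair_mod n (x1 + k' * a, x2 + k' * b)"
    and S: "S \<in> perfect_sudoku_grids n t c"
  shows "pullback \<phi> S \<in> perfect_sudoku_grids n t c"
proof (rule pullback_mem_perfect_sudoku_grids[OF n_pos code_tiling enumeration iso lines _ S])
  show "\<forall>q\<in>code. pair_mod n (\<phi> q) \<in> code"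
  proof
    fix q assume "q \<in> code"
    then obtain k where q: "q = pair_mod n (x1 + k * a, x2 + k * b)"
      by (auto simp: mem_code_iff)
    obtain k' where k': "pair_mod n (\<phi> (x1 + k * a, x2 + k * b)) = pair_mod n (x1 + k' * a, x2 + k' * b)"
      using maps by blast
    have "pair_mod n (\<phi> q) = pair_mod n (\<phi> (x1 + k * a, x2 + k * b))"
      using lee_isometry_pair_mod_eq_iff[OF n_pos iso] q by simp
    then show "pair_mod n (\<phi> q) \<in> code"
      using k' by (auto simp: mem_code_iff)
  qed
qed

lemma pullback_translation_mem:
  assumes "S \<in> perfect_sudoku_grids n t c"
  shows "pullback (\<lambda>p. p + (e * a, e * b)) S \<in> perfect_sudoku_grids n t c"
proof (rule pullback_mem_if_preserves_code[OF lee_isometry_motions(1) preserves_alignment_motions(1) _ assms])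
  fix k
  have "(x1 + k * a, x2 + k * b) + (e * a, e * b) = (x1 + (k + e) * a, x2 + (k + e) * b)"
    by (simp add: algebra_simps)
  then show "\<exists>k'. pair_mod n ((x1 + k * a, x2 + k * b) + (e * a, e * b)) = pair_mod n (x1 + k' * a, x2 + k' * b)"
    by metis
qed

lemma pullback_quarter_turn_mem:
  assumes m: "n dvd m * a + b" "n dvd m * b - a"
    and v: "n dvd fst v - (x1 + x2)" "n dvd snd v - (x2 - x1)"
    and S: "S \<in> perfect_sudoku_grids n t c"
  shows "pullback (\<lambda>p. v + quarter_turn p) S \<in> perfect_sudoku_grids n t c"
proof (rule pullback_mem_if_preserves_code[OF lee_isometry_motions(2) preserves_alignment_motions(2) _ S])
  fix k
  let ?p = "v + quarter_turn (x1 + k * a, x2 + k * b)" and ?q = "(x1 + (k * m) * a, x2 + (k * m) * b)"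
  have "n dvd (fst v - (x1 + x2)) - k * (m * a + b)"
    using v m by simp
  also have "(fst v - (x1 + x2)) - k * (m * a + b) = fst ?p - fst ?q"
    by (simp add: quarter_turn_def algebra_simps)
  finally have "n dvd fst ?p - fst ?q" .
  moreover have "n dvd (snd v - (x2 - x1)) - k * (m * b - a)"
    using v m by simp
  moreover have "(snd v - (x2 - x1)) - k * (m * b - a) = snd ?p - snd ?q"
    by (simp add: quarter_turn_def algebra_simps)
  ultimately have "pair_mod n ?p = pair_mod n ?q"
    by (intro pair_mod_eq_if_dvd) simp_all
  then show "\<exists>k'. pair_mod n (v + quarter_turn (x1 + k * a, x2 + k * b)) = pair_mod n (x1 + k' * a, x2 + k' * b)"
    by blast
qed

lemma pullback_quarter_turn_back_mem:
  assumes m: "n dvd m * a + b" "n dvd m * b - a"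
    and v: "n dvd fst v - (x1 - x2)" "n dvd snd v - (x1 + x2)"
    and S: "S \<in> perfect_sudoku_grids n t c"
  shows "pullback (\<lambda>p. v - quarter_turn p) S \<in> perfect_sudoku_grids n t c"
proof (rule pullback_mem_if_preserves_code[OF lee_isometry_motions(3) preserves_alignment_motions(3) _ S])
  fix k
  let ?p = "v - quarter_turn (x1 + k * a, x2 + k * b)" and ?q = "(x1 + (- k * m) * a, x2 + (- k * m) * b)"
  have "n dvd (fst v - (x1 - x2)) + k * (m * a + b)"
    using v m by simp
  also have "(fst v - (x1 - x2)) + k * (m * a + b) = fst ?p - fst ?q"
    by (simp add: quarter_turn_def algebra_simps)
  finally have "n dvd fst ?p - fst ?q" .
  moreover have "n dvd (snd v - (x1 + x2)) + k * (m * b - a)"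
    using v m by simp
  moreover have "(snd v - (x1 + x2)) + k * (m * b - a) = snd ?p - snd ?q"
    by (simp add: quarter_turn_def algebra_simps)
  ultimately have "pair_mod n ?p = pair_mod n ?q"
    by (intro pair_mod_eq_if_dvd) simp_all
  then show "\<exists>k'. pair_mod n (v - quarter_turn (x1 + k * a, x2 + k * b)) = pair_mod n (x1 + k' * a, x2 + k' * b)"
    by blast
qed


text \<open>\<open>(x1 + x2, x2 - x1) + quarter_turn p = x + quarter_turn (p - x)\<close> is the quarter turn about
  \<open>x\<close>; \<open>rot\<close> adds a shift by \<open>n\<close>.\<close>

lemma rotation_generator_eq:
  "tau2_pow (x1 + x2 + 1) \<circ> tau1_pow (x1 - x2) \<circ> rot n
     = pullback (\<lambda>p. (n + x1 + x2, x2 - x1) + quarter_turn p)"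
  by (simp add: fun_eq_iff pullback_def tau1_pow_def tau2_pow_def rot_def quarter_turn_def algebra_simps)

lemma translation_generator_eq: "tau1_pow a \<circ> tau2_pow b = pullback (\<lambda>p. p + ((- 1) * a, (- 1) * b))"
  by (simp add: fun_eq_iff pullback_def tau1_pow_def tau2_pow_def)

lemma rotation_generator_mem:
  fixes S :: "int \<Rightarrow> int \<Rightarrow> nat"
  assumes S: "S \<in> perfect_sudoku_grids n t c"
  shows "(tau2_pow (x1 + x2 + 1) \<circ> tau1_pow (x1 - x2) \<circ> rot n) S \<in> perfect_sudoku_grids n t c"
    and "inv (tau2_pow (x1 + x2 + 1) \<circ> tau1_pow (x1 - x2) \<circ> rot n) S \<in> perfect_sudoku_grids n t c"
proof -
  obtain m where m: "n dvd m * a + b" "n dvd m * b - a"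
    using span_quarter_turn by blast
  have inverse: "inv (pullback (\<lambda>p. (n + x1 + x2, x2 - x1) + quarter_turn p) :: (int \<Rightarrow> int \<Rightarrow> nat) \<Rightarrow> _)
      = pullback (\<lambda>p. (x1 - x2, n + x1 + x2) - quarter_turn p)"
    by (rule inv_pullback) (simp_all add: quarter_turn_def)
  show "(tau2_pow (x1 + x2 + 1) \<circ> tau1_pow (x1 - x2) \<circ> rot n) S \<in> perfect_sudoku_grids n t c"
    unfolding rotation_generator_eq by (rule pullback_quarter_turn_mem[OF m _ _ S]) simp_all
  show "inv (tau2_pow (x1 + x2 + 1) \<circ> tau1_pow (x1 - x2) \<circ> rot n) S \<in> perfect_sudoku_grids n t c"
    unfolding rotation_generator_eq inverse by (rule pullback_quarter_turn_back_mem[OF m _ _ S]) simp_all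
qed

lemma translation_generator_mem:
  fixes S :: "int \<Rightarrow> int \<Rightarrow> nat"
  assumes S: "S \<in> perfect_sudoku_grids n t c"
  shows "(tau1_pow a \<circ> tau2_pow b) S \<in> perfect_sudoku_grids n t c"
    and "inv (tau1_pow a \<circ> tau2_pow b) S \<in> perfect_sudoku_grids n t c"
proof -
  have inverse: "inv (pullback (\<lambda>p. p + ((- 1) * a, (- 1) * b)) :: (int \<Rightarrow> int \<Rightarrow> nat) \<Rightarrow> _)
      = pullback (\<lambda>p. p + (1 * a, 1 * b))"
    by (rule inv_pullback) (simp_all add: zero_prod_def)
  show "(tau1_pow a \<circ> tau2_pow b) S \<in> perfect_sudoku_grids n t c"
    unfolding translation_generator_eq by (rule pullback_translation_mem[OF S])
  show "inv (tau1_pow a \<circ> tau2_pow b) S \<in> perfect_sudoku_grids n t c"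
    unfolding translation_generator_eq inverse by (rule pullback_translation_mem[OF S])
qed

end

theorem mainTheorem2:
  fixes t n a b x1 x2 :: int and c :: "nat \<Rightarrow> int \<times> int"
  assumes "t \<ge> 1"
    and "n = 2 * t\<^sup>2 + 2 * t + 1"
    and "a \<in> {0..<n}" and "b \<in> {0..<n}" and "(a, b) \<noteq> (0, 0)"
    and "perfect_code n (span1 n a b)"
    and "t_error_correcting n t (span1 n a b)"
    and "x1 \<in> {0..<n}" and "x2 \<in> {0..<n}"
    and "bij_betw c {1..nat n} (translate_code n (x1, x2) (span1 n a b))"
  shows "\<forall>S \<in> perfect_sudoku_grids n t c.
           \<forall>g \<in> gen_group {tau2_pow (x1 + x2 + 1) \<circ> tau1_pow (x1 - x2) \<circ> rot n,
                            tau1_pow a \<circ> tau2_pow b}.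
             g S \<in> perfect_sudoku_grids n t c"
proof -
  interpret perfect_lee_code t n a b x1 x2 c
    using assms(1,2,7,10) by unfold_locales
  have "g S \<in> perfect_sudoku_grids n t c"
    if "g \<in> gen_group {tau2_pow (x1 + x2 + 1) \<circ> tau1_pow (x1 - x2) \<circ> rot n, tau1_pow a \<circ> tau2_pow b}"
      and "S \<in> perfect_sudoku_grids n t c" for g S
    by (rule gen_group_preserves[OF that(1) _ _ that(2)])
      (use rotation_generator_mem translation_generator_mem in auto)
  then show ?thesis by blast
qed

end
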